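(* Let $s_y\ge 0$ and $t\ge 1$ be integers, $Y=[0,s_y]$, $a=4s_y+3$, and $I_1=[0,t]\times Y$, $T=[0,(t),at^2-t]\times\{0\}$, $S=[at^2,(t+1),(a+1)t^2-1]\times Y$, $I_2=[2at^2,2at^2+t]\times Y$, $I_3=[(3a+1)t^2,(3a+1)t^2+t]\times Y$, and $A=I_1\cup I_2\cup I_3\cup T\cup S$. Then $|A|=(8s_y+7)t+(3s_y+1)$ and $A+A\supseteq[0,(16s_y+14)t^2-1]\times[0,s_y]$.
   Context: For integers $a\le b$, $[a,b]$ denotes $\{a,\dots,b\}$. For integers $a\le b$ and $t\ge1$ with $t\mid b-a$, $[a,(t),b]=\{a,a+t,a+2t,\dots,b\}$. $A+A=\{(x+x',y+y'):(x,y),(x',y')\in A\}$ (summands may coincide). *)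

theory Defs
  imports Main
begin

text \<open>Arithmetic progression [a,(t),b] = {a, a+t, ..., b} (assuming t >= 1 and t divides b - a).\<close>
definition step_interval :: "int \<Rightarrow> int \<Rightarrow> int \<Rightarrow> int set" where
  "step_interval a t b = {x. a \<le> x \<and> x \<le> b \<and> t dvd (x - a)}"

definition sumset :: "(int \<times> int) set \<Rightarrow> (int \<times> int) set" where
  "sumset A = {(x + x', y + y') | x y x' y'. (x, y) \<in> A \<and> (x', y') \<in> A}"

end

theory Submission
  imports Defs
begin

(* Put P = a t^2. Adding the progression T = {0, t, ..., P - t} to an interval of width t covers
   P + 1 consecutive integers; adding the t-term progression S = {P, P + (t + 1), ...} covers
   t^2 + t of them; and T + S covers [P + t^2 - t, 2P - 1], because every integer there is
   k t + j (t + 1) with j < t. With the intervals I1, I2, I3 placed at 0, 2P and 3P + t^2, the seven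
   sums T + I1, S + I1, T + S, T + I2, S + I2, T + I3, S + I3 chain together to cover
   [0, 4P + 2t^2 - 1] in every row. The pieces occupy disjoint ranges of x-coordinates, except for
   the two points of T lying in I1, which gives |A|. *)

lemma sumsetI: "(x, y) \<in> A \<Longrightarrow> (x', y') \<in> A \<Longrightarrow> (x + x', y + y') \<in> sumset A"
  unfolding sumset_def by blast

lemma step_interval_eq_image:
  fixes c m n :: int
  assumes "1 \<le> m"
  shows "step_interval c m (c + n * m) = (\<lambda>k. c + k * m) ` {0..n}"
proof (intro set_eqI iffI)
  fix x assume "x \<in> step_interval c m (c + n * m)"
  then have x: "c \<le> x" "x \<le> c + n * m" "m dvd x - c" unfolding step_interval_def by auto
  then obtain k where k: "x - c = m * k" by (elim dvdE)
  with x have "x = c + m * k" "0 \<le> m * k" "m * k \<le> m * n" by (simp_all add: algebra_simps)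
  then have "0 \<le> k" "k \<le> n" using assms by (simp_all add: zero_le_mult_iff)
  with \<open>x = c + m * k\<close> show "x \<in> (\<lambda>k. c + k * m) ` {0..n}" by (auto simp: mult.commute)
next
  fix x assume "x \<in> (\<lambda>k. c + k * m) ` {0..n}"
  then obtain k where "x = c + k * m" "0 \<le> k" "k \<le> n" by force
  moreover have "k * m \<le> n * m" using calculation assms by (intro mult_right_mono) auto
  ultimately show "x \<in> step_interval c m (c + n * m)"
    unfolding step_interval_def using assms by auto
qed

lemma card_step_interval:
  fixes c m n :: int
  assumes "1 \<le> m"
  shows "card (step_interval c m (c + n * m)) = nat (n + 1)"
proof -
  have "inj_on (\<lambda>k. c + k * m) {0..n}" using assms by (auto simp: inj_on_def)
  then show ?thesis by (simp add: step_interval_eq_image[OF assms] card_image)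
qed

lemma bounded_quotient_remainder:
  fixes n m d N :: int
  assumes "1 \<le> m" "m - 1 \<le> d" "1 \<le> N" "0 \<le> n" "n \<le> (N - 1) * m + d"
  shows "\<exists>k r. 0 \<le> k \<and> k \<le> N - 1 \<and> 0 \<le> r \<and> r \<le> d \<and> n = k * m + r"
proof -
  define k where "k = min (n div m) (N - 1)"
  have "0 \<le> k" unfolding k_def using assms by (simp add: pos_imp_zdiv_nonneg_iff)
  have "k * m \<le> (n div m) * m" unfolding k_def using assms by (intro mult_right_mono) auto
  also have "\<dots> \<le> n" using div_mult_mod_eq[of n m] pos_mod_sign[of m n] assms by linarith
  finally have "0 \<le> n - k * m" by simp
  moreover have "n - k * m \<le> d"
  proof (cases "n div m \<le> N - 1")
    case True
    then have "n - k * m = n mod m" unfolding k_def by (simp add: minus_div_mult_eq_mod)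
    then show ?thesis using assms pos_mod_bound[of m n] by linarith
  qed (use assms in \<open>simp add: k_def\<close>)
  ultimately show ?thesis
    using \<open>0 \<le> k\<close> by (intro exI[of _ k] exI[of _ "n - k * m"]) (auto simp: k_def)
qed

lemma two_step_decomposition:
  fixes n t N :: int
  assumes "1 \<le> t" "(t - 1) * t \<le> n" "n \<le> N * t - 1"
  shows "\<exists>k j. 0 \<le> k \<and> k \<le> N - 1 \<and> 0 \<le> j \<and> j \<le> t - 1 \<and> n = k * t + j * (t + 1)"
proof -
  define q j where "q = n div t" and "j = n mod t"
  have n: "n = q * t + j" unfolding q_def j_def by simp
  have j: "0 \<le> j" "j < t" unfolding j_def using assms by auto
  have "q * t < N * t" using n j assms by linarith
  then have "q < N" using assms by (simp add: mult_less_cancel_right)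
  have "(t - 1) * t < (q + 1) * t" using n j assms by (simp add: algebra_simps)
  then have "t - 1 < q + 1" using assms by (simp add: mult_less_cancel_right)
  have "n = (q - j) * t + j * (t + 1)" using n by (simp add: algebra_simps)
  with \<open>q < N\<close> \<open>t - 1 < q + 1\<close> j show ?thesis by (intro exI[of _ "q - j"] exI[of _ j]) auto
qed

lemma sumset_progression_plus_interval:
  fixes A :: "(int \<times> int) set"
  assumes "1 \<le> m" "m - 1 \<le> d" "1 \<le> N"
    and progression: "(\<lambda>k. (c + k * m, y)) ` {0 .. N - 1} \<subseteq> A"
    and interval: "(\<lambda>r. (c' + r, y')) ` {0 .. d} \<subseteq> A"
  shows "{c + c' .. c + c' + (N - 1) * m + d} \<times> {y + y'} \<subseteq> sumset A"
proof clarify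
  fix x assume "x \<in> {c + c' .. c + c' + (N - 1) * m + d}"
  then obtain k r where "0 \<le> k" "k \<le> N - 1" "0 \<le> r" "r \<le> d" "x - (c + c') = k * m + r"
    using bounded_quotient_remainder[of m d N "x - (c + c')"] assms by auto
  moreover from calculation have "(c + k * m + (c' + r), y + y') \<in> sumset A"
    using progression interval by (intro sumsetI) (auto simp: image_subset_iff)
  ultimately show "(x, y + y') \<in> sumset A" by (simp add: algebra_simps)
qed

lemma sumset_two_progressions:
  fixes A :: "(int \<times> int) set"
  assumes "1 \<le> t"
    and progression: "(\<lambda>k. (c + k * t, y)) ` {0 .. N - 1} \<subseteq> A"
    and progression': "(\<lambda>j. (c' + j * (t + 1), y')) ` {0 .. t - 1} \<subseteq> A"
  shows "{c + c' + (t - 1) * t .. c + c' + N * t - 1} \<times> {y + y'} \<subseteq> sumset A"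
proof clarify
  fix x assume "x \<in> {c + c' + (t - 1) * t .. c + c' + N * t - 1}"
  then obtain k j where "0 \<le> k" "k \<le> N - 1" "0 \<le> j" "j \<le> t - 1"
      "x - (c + c') = k * t + j * (t + 1)"
    using two_step_decomposition[of t "x - (c + c')" N] assms by auto
  moreover from calculation have "(c + k * t + (c' + j * (t + 1)), y + y') \<in> sumset A"
    using progression progression' by (intro sumsetI) (auto simp: image_subset_iff)
  ultimately show "(x, y + y') \<in> sumset A" by (simp add: algebra_simps)
qed

locale sumset_construction =
  fixes s t a :: int
  assumes s_nonneg: "0 \<le> s" and t_pos: "1 \<le> t" and a_ge_2: "2 \<le> a"
begin

definition Y :: "int set" where "Y = {0..s}"
definition I1 :: "(int \<times> int) set" where "I1 = {0..t} \<times> Y"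
definition T :: "(int \<times> int) set" where "T = step_interval 0 t (a * t^2 - t) \<times> {0}"
definition S :: "(int \<times> int) set"
  where "S = step_interval (a * t^2) (t + 1) ((a + 1) * t^2 - 1) \<times> Y"
definition I2 :: "(int \<times> int) set" where "I2 = {2 * a * t^2 .. 2 * a * t^2 + t} \<times> Y"
definition I3 :: "(int \<times> int) set"
  where "I3 = {(3 * a + 1) * t^2 .. (3 * a + 1) * t^2 + t} \<times> Y"
definition A :: "(int \<times> int) set" where "A = I1 \<union> I2 \<union> I3 \<union> T \<union> S"

lemma T_eq: "T = (\<lambda>k. k * t) ` {0 .. a * t - 1} \<times> {0}"
proof -
  have "a * t^2 - t = 0 + (a * t - 1) * t" by (simp add: algebra_simps power2_eq_square)
  then show ?thesis unfolding T_def using step_interval_eq_image[OF t_pos, of 0 "a * t - 1"] by simp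
qed

lemma S_eq: "S = (\<lambda>j. a * t^2 + j * (t + 1)) ` {0 .. t - 1} \<times> Y"
proof -
  have "(a + 1) * t^2 - 1 = a * t^2 + (t - 1) * (t + 1)" by (simp add: algebra_simps power2_eq_square)
  then show ?thesis unfolding S_def using step_interval_eq_image[of "t + 1"] t_pos by simp
qed

lemma card_T: "card T = nat (a * t)"
proof -
  have "a * t^2 - t = 0 + (a * t - 1) * t" by (simp add: algebra_simps power2_eq_square)
  then show ?thesis unfolding T_def using card_step_interval[OF t_pos, of 0 "a * t - 1"]
    by (simp add: card_cartesian_product)
qed

lemma card_S: "int (card S) = t * (s + 1)"
proof -
  have "(a + 1) * t^2 - 1 = a * t^2 + (t - 1) * (t + 1)" by (simp add: algebra_simps power2_eq_square)
  then show ?thesis unfolding S_def Y_def using card_step_interval[of "t + 1"] t_pos s_nonneg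
    by (simp add: card_cartesian_product)
qed


lemma t_le_t_squared: "t \<le> t^2"
  using t_pos by (simp add: power2_eq_square)

lemma two_t_squared_le: "2 * t^2 \<le> a * t^2"
  using a_ge_2 by (simp add: mult_right_mono)

lemma two_le_a_t: "2 \<le> a * t"
  using mult_mono[of 2 a 1 t] a_ge_2 t_pos by simp

lemma zero_in_Y: "0 \<in> Y"
  unfolding Y_def using s_nonneg by simp

lemma progression_T_subset: "(\<lambda>k. (k * t, 0)) ` {0 .. a * t - 1} \<subseteq> A"
  unfolding A_def T_eq by auto

lemma progression_S_subset:
  "y \<in> Y \<Longrightarrow> (\<lambda>j. (a * t^2 + j * (t + 1), y)) ` {0 .. t - 1} \<subseteq> A"
  unfolding A_def S_eq by auto

lemma interval_I1_subset: "y \<in> Y \<Longrightarrow> (\<lambda>r. (r, y)) ` {0 .. t} \<subseteq> A"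
  unfolding A_def I1_def by auto

lemma interval_I2_subset: "y \<in> Y \<Longrightarrow> (\<lambda>r. (2 * a * t^2 + r, y)) ` {0 .. t} \<subseteq> A"
  unfolding A_def I2_def by auto

lemma interval_I3_subset: "y \<in> Y \<Longrightarrow> (\<lambda>r. ((3 * a + 1) * t^2 + r, y)) ` {0 .. t} \<subseteq> A"
  unfolding A_def I3_def by auto

lemma row_subset_sumset:
  assumes "y \<in> Y"
  shows "{0 .. (4 * a + 2) * t^2 - 1} \<times> {y} \<subseteq> sumset A"
proof -
  define P where "P = a * t^2"
  have at: "(a * t - 1) * t = P - t" "(a * t) * t = P"
    by (auto simp: P_def algebra_simps power2_eq_square)
  have tt: "(t - 1) * (t + 1) = t^2 - 1" "(t - 1) * t = t^2 - t"
    by (simp_all add: algebra_simps power2_eq_square)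
  have shifts: "2 * a * t^2 = 2 * P" "(3 * a + 1) * t^2 = 3 * P + t^2"
    "(4 * a + 2) * t^2 = 4 * P + 2 * t^2"
    by (simp_all add: P_def algebra_simps)
  note T_prog = progression_T_subset
    and S_prog = progression_S_subset[OF zero_in_Y, folded P_def]
    and I1_row = interval_I1_subset[OF assms]
    and I2_row = interval_I2_subset[OF assms, unfolded shifts]
    and I3_row = interval_I3_subset[OF assms, unfolded shifts]
  note T_plus = sumset_progression_plus_interval
    [where m = t and d = t and N = "a * t" and c = 0 and y = 0 and A = A and y' = y]
  note S_plus = sumset_progression_plus_interval
    [where m = "t + 1" and d = t and N = t and c = P and y = 0 and A = A and y' = y]
  have "{0 .. P} \<times> {y} \<subseteq> sumset A"
    using T_plus[where c' = 0] T_prog I1_row t_pos two_le_a_t at by simp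
  moreover have "{P .. P + t^2 + t - 1} \<times> {y} \<subseteq> sumset A"
    using S_plus[where c' = 0] S_prog I1_row t_pos tt by (simp add: algebra_simps)
  moreover have "{P + t^2 - t .. 2 * P - 1} \<times> {y} \<subseteq> sumset A"
    using sumset_two_progressions
        [OF t_pos, where c = 0 and y = 0 and N = "a * t" and c' = P and A = A and y' = y]
      T_prog progression_S_subset[OF assms, folded P_def] at tt
    by (simp add: algebra_simps)
  moreover have "{2 * P .. 3 * P} \<times> {y} \<subseteq> sumset A"
    using T_plus[where c' = "2 * P"] T_prog I2_row t_pos two_le_a_t at by simp
  moreover have "{3 * P .. 3 * P + t^2 + t - 1} \<times> {y} \<subseteq> sumset A"
    using S_plus[where c' = "2 * P"] S_prog I2_row t_pos tt by (simp add: algebra_simps)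
  moreover have "{3 * P + t^2 .. 4 * P + t^2} \<times> {y} \<subseteq> sumset A"
    using T_plus[where c' = "3 * P + t^2"] T_prog I3_row t_pos two_le_a_t at
    by (simp add: algebra_simps)
  moreover have "{4 * P + t^2 .. 4 * P + 2 * t^2 + t - 1} \<times> {y} \<subseteq> sumset A"
    using S_plus[where c' = "3 * P + t^2"] S_prog I3_row t_pos tt by (simp add: algebra_simps)
  moreover have "{0 .. 4 * P + 2 * t^2 - 1} \<subseteq> {0 .. P} \<union> {P .. P + t^2 + t - 1} \<union>
      {P + t^2 - t .. 2 * P - 1} \<union> {2 * P .. 3 * P} \<union> {3 * P .. 3 * P + t^2 + t - 1} \<union>
      {3 * P + t^2 .. 4 * P + t^2} \<union> {4 * P + t^2 .. 4 * P + 2 * t^2 + t - 1}"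
    using t_pos by auto
  ultimately show ?thesis unfolding shifts by blast
qed

lemma box_subset_sumset: "{0 .. (4 * a + 2) * t^2 - 1} \<times> Y \<subseteq> sumset A"
  using row_subset_sumset by blast

lemma card_Y: "int (card Y) = s + 1"
  unfolding Y_def using s_nonneg by simp

lemma I1_Int_T: "I1 \<inter> T = {(0, 0), (t, 0)}"
proof -
  have "k * t \<le> t \<longleftrightarrow> k \<le> 1" for k using t_pos by (simp add: mult_le_cancel_right1)
  then have "{0..t} \<inter> (\<lambda>k. k * t) ` {0 .. a * t - 1} = {0, t}"
    using t_pos two_le_a_t by (auto simp: image_iff intro: bexI[of _ 0] bexI[of _ 1])
  then show ?thesis unfolding I1_def T_eq using zero_in_Y by blast
qed

lemma card_I1_Un_T: "int (card (I1 \<union> T)) = (t + 1) * (s + 1) + a * t - 2"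
proof -
  have "finite I1" "finite T" unfolding I1_def Y_def T_eq by auto
  from card_Un_Int[OF this] have "card (I1 \<union> T) + card (I1 \<inter> T) = card I1 + card T" by linarith
  moreover have "card (I1 \<inter> T) = 2" unfolding I1_Int_T using t_pos by simp
  moreover have "int (card I1) = (t + 1) * (s + 1)"
    unfolding I1_def card_cartesian_product using card_Y t_pos by simp
  ultimately show ?thesis using card_T two_le_a_t by simp
qed

lemma card_A: "int (card A) = (a + 4 * s + 4) * t + 3 * s + 1"
proof -
  define P where "P = a * t^2"
  have shifts: "2 * a * t^2 = 2 * P" "(3 * a + 1) * t^2 = 3 * P + t^2" "(a + 1) * t^2 = P + t^2"
    by (simp_all add: P_def algebra_simps)
  have "t \<le> P - t" "P + t^2 - 1 < 2 * P" "2 * P + t < 3 * P + t^2"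
    using t_pos t_le_t_squared two_t_squared_le unfolding P_def by linarith+
  have "fst p \<le> P - t" if "p \<in> I1 \<union> T" for p
    using that \<open>t \<le> P - t\<close> unfolding I1_def T_def step_interval_def P_def by auto
  moreover have "P \<le> fst p \<and> fst p \<le> P + t^2 - 1" if "p \<in> S" for p
    using that unfolding S_def step_interval_def shifts P_def by auto
  moreover have "2 * P \<le> fst p \<and> fst p \<le> 2 * P + t" if "p \<in> I2" for p
    using that unfolding I2_def shifts by auto
  moreover have "3 * P + t^2 \<le> fst p" if "p \<in> I3" for p
    using that unfolding I3_def shifts by auto
  ultimately have disjoint:
      "(I1 \<union> T) \<inter> (S \<union> (I2 \<union> I3)) = {}" "S \<inter> (I2 \<union> I3) = {}" "I2 \<inter> I3 = {}"
    using \<open>P + t^2 - 1 < 2 * P\<close> \<open>2 * P + t < 3 * P + t^2\<close> t_pos by (fastforce dest: not_le_imp_less)+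
  have "finite (I1 \<union> T)" "finite S" "finite I2" "finite I3"
    unfolding I1_def T_eq S_eq I2_def I3_def Y_def by auto
  moreover have "A = (I1 \<union> T) \<union> (S \<union> (I2 \<union> I3))" unfolding A_def by blast
  ultimately have "card A = card (I1 \<union> T) + card S + card I2 + card I3"
    using disjoint by (simp add: card_Un_disjoint)
  moreover have "int (card I2) = (t + 1) * (s + 1)" "int (card I3) = (t + 1) * (s + 1)"
    unfolding I2_def I3_def card_cartesian_product using card_Y t_pos by simp_all
  ultimately show ?thesis using card_I1_Un_T card_S by (simp add: algebra_simps)
qed

end

theorem mainTheorem13:
  fixes s\<^sub>y t :: int
  assumes "s\<^sub>y \<ge> 0" and "t \<ge> 1"
  defines "Y \<equiv> {0..s\<^sub>y}"
    and "a \<equiv> 4 * s\<^sub>y + 3"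
  defines "I1 \<equiv> {0..t} \<times> Y"
    and "T \<equiv> step_interval 0 t (a * t^2 - t) \<times> {0}"
    and "S \<equiv> step_interval (a * t^2) (t + 1) ((a + 1) * t^2 - 1) \<times> Y"
    and "I2 \<equiv> {2 * a * t^2 .. 2 * a * t^2 + t} \<times> Y"
    and "I3 \<equiv> {(3 * a + 1) * t^2 .. (3 * a + 1) * t^2 + t} \<times> Y"
  defines "A \<equiv> I1 \<union> I2 \<union> I3 \<union> T \<union> S"
  shows "int (card A) = (8 * s\<^sub>y + 7) * t + (3 * s\<^sub>y + 1)
         \<and> {0 .. (16 * s\<^sub>y + 14) * t^2 - 1} \<times> {0..s\<^sub>y} \<subseteq> sumset A"
proof -
  have construction: "sumset_construction s\<^sub>y t a"
    unfolding a_def using assms by unfold_locales auto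
  have "A = sumset_construction.A s\<^sub>y t a"
    unfolding A_def I1_def T_def S_def I2_def I3_def Y_def
    using sumset_construction.A_def sumset_construction.I1_def sumset_construction.T_def
      sumset_construction.S_def sumset_construction.I2_def sumset_construction.I3_def
      sumset_construction.Y_def
    by (simp add: construction)
  then show ?thesis
    using sumset_construction.card_A[OF construction]
      sumset_construction.box_subset_sumset[OF construction]
    unfolding sumset_construction.Y_def[OF construction] a_def by (simp add: algebra_simps)
qed

end
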